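(* Let $\mathbf K$ be the complete linearly ordered set obtained from $\mathbb N=\{0,1,2,\dots\}$ (usual order) by adding a top element $\omega$, regarded as a complete lattice, and let $\mathbf L=\mathbf K\times\{0,1\}$ be the product lattice (componentwise order, with $\{0,1\}$ ordered by $0<1$). Then in the complete lattice $\mathbf L$: the element $(\omega,0)$ is a relative generator, but $(\omega,0)$ belongs to every maximal proper complete sublattice of $\mathbf L$. Moreover, the set $\Gamma$ of all non-generators of $\mathbf L$ is a complete sublattice of $\mathbf L$.
   Context: A complete lattice is a partially ordered set in which every subset (including the empty set) has a meet and a join. A complete sublattice of a complete lattice $\mathbf L$ is a subset $T\subseteq L$ closed under arbitrary meets and joins computed in $L$, including those of the empty set (so $T$ contains the minimum and the maximum of $L$). For $X\subseteq L$, $\langle X\rangle$ is the intersection of all complete sublattices containing $X$, and $\langle X,a\rangle=\langle X\cup\{a\}\rangle$. An element $a$ is a non-generator if for every $X\subseteq L$, $\langle X,a\rangle=L$ implies $\langle X\rangle=L$; otherwise $a$ is a relative generator. A maximal proper complete sublattice is a complete sublattice $T\ne L$ that is not properly contained in any complete sublattice other than $L$. *)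

theory Defs
  imports Main "HOL-Library.Extended_Nat" "HOL-Library.Product_Order"
begin

definition complete_sublattice :: "'a::complete_lattice set \<Rightarrow> bool" where
  "complete_sublattice T \<longleftrightarrow> (\<forall>S. S \<subseteq> T \<longrightarrow> Inf S \<in> T \<and> Sup S \<in> T)"

definition gen :: "'a::complete_lattice set \<Rightarrow> 'a set" where
  "gen X = \<Inter>{T. complete_sublattice T \<and> X \<subseteq> T}"

definition non_generator :: "'a::complete_lattice \<Rightarrow> bool" where
  "non_generator a \<longleftrightarrow> (\<forall>X. gen (insert a X) = UNIV \<longrightarrow> gen X = UNIV)"

definition relative_generator :: "'a::complete_lattice \<Rightarrow> bool" where
  "relative_generator a \<longleftrightarrow> \<not> non_generator a"

definition maximal_proper_complete_sublattice :: "'a::complete_lattice set \<Rightarrow> bool" where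
  "maximal_proper_complete_sublattice T \<longleftrightarrow>
     complete_sublattice T \<and> T \<noteq> UNIV \<and>
     (\<forall>T'. complete_sublattice T' \<and> T \<subseteq> T' \<longrightarrow> T' = T \<or> T' = UNIV)"

end

theory Submission
  imports Defs
begin

text \<open>The non-generators are exactly the bottom and the top: every other point \<open>a\<close> lies
  outside some complete sublattice \<open>T\<close> that generates everything together with \<open>a\<close>.
  For \<open>(n, b)\<close> with \<open>0 < n < \<omega>\<close> take the points with first coordinate \<open>\<noteq> n\<close>, from
  which \<open>(n, \<not> b)\<close> is recovered as the meet with \<open>(n + 1, 0)\<close> or the join with
  \<open>(n - 1, 1)\<close>; for \<open>(0, 1)\<close> take its complement; for \<open>(\<omega>, 0)\<close> take the points
  \<open>(x, 1)\<close> together with the bottom, since \<open>(x, 1)\<close> meets \<open>(\<omega>, 0)\<close> in \<open>(x, 0)\<close>.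

  A maximal proper complete sublattice \<open>T\<close> omitting \<open>(\<omega>, 0)\<close> is impossible: the join
  of the points of \<open>T\<close> with second coordinate \<open>0\<close> lies in \<open>T\<close>, so it is some
  \<open>(N, 0)\<close> with \<open>N\<close> finite, and then \<open>T\<close> lies properly inside the proper complete
  sublattice of the points \<open>(x, b)\<close> with \<open>b = 1\<close> or \<open>x \<le> N + 1\<close>.\<close>

lemma complete_sublattice_Inf: "complete_sublattice T \<Longrightarrow> S \<subseteq> T \<Longrightarrow> Inf S \<in> T"
  unfolding complete_sublattice_def by blast

lemma complete_sublattice_Sup: "complete_sublattice T \<Longrightarrow> S \<subseteq> T \<Longrightarrow> Sup S \<in> T"
  unfolding complete_sublattice_def by blast

lemma complete_sublattice_bot: "complete_sublattice T \<Longrightarrow> bot \<in> T"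
  using complete_sublattice_Sup[of T "{}"] by simp

lemma complete_sublattice_top: "complete_sublattice T \<Longrightarrow> top \<in> T"
  using complete_sublattice_Inf[of T "{}"] by simp

lemma complete_sublattice_inf:
  "complete_sublattice T \<Longrightarrow> x \<in> T \<Longrightarrow> y \<in> T \<Longrightarrow> inf x y \<in> T"
  using complete_sublattice_Inf[of T "{x, y}"] by simp

lemma complete_sublattice_sup:
  "complete_sublattice T \<Longrightarrow> x \<in> T \<Longrightarrow> y \<in> T \<Longrightarrow> sup x y \<in> T"
  using complete_sublattice_Sup[of T "{x, y}"] by simp

lemma complete_sublattice_bot_top: "complete_sublattice {bot, top}"
  unfolding complete_sublattice_def
proof (intro allI impI conjI)
  fix S :: "'a set"
  assume S: "S \<subseteq> {bot, top}"
  show "Inf S \<in> {bot, top}"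
  proof (cases "bot \<in> S")
    case False
    then have "S \<subseteq> {top}" using S by blast
    then show ?thesis by (simp add: Inf_top_conv(1) subset_iff)
  qed (simp add: Inf_lower le_bot)
  show "Sup S \<in> {bot, top}"
  proof (cases "top \<in> S")
    case False
    then have "S \<subseteq> {bot}" using S by blast
    then show ?thesis by (simp add: Sup_bot_conv(1) subset_iff)
  qed (metis Sup_upper top_unique insertCI)
qed

lemma complete_sublattice_Compl_singleton:
  assumes "\<And>S. Inf S = a \<Longrightarrow> a \<in> S" and "\<And>S. Sup S = a \<Longrightarrow> a \<in> S"
  shows "complete_sublattice (- {a})"
  unfolding complete_sublattice_def using assms by blast

lemma complete_sublattice_fst_vimage:
  fixes T :: "'a::complete_lattice set"
  assumes "complete_sublattice T"
  shows "complete_sublattice (fst -` T :: ('a \<times> 'b::complete_lattice) set)"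
  unfolding complete_sublattice_def
proof (intro allI impI conjI)
  fix S :: "('a \<times> 'b) set"
  assume "S \<subseteq> fst -` T"
  then have "fst ` S \<subseteq> T" by blast
  then show "Inf S \<in> fst -` T" "Sup S \<in> fst -` T"
    using assms unfolding complete_sublattice_def by (simp_all add: fst_Inf fst_Sup)
qed

lemma complete_sublattice_snd_or_fst_le:
  "complete_sublattice {q :: 'a::complete_lattice \<times> bool. snd q \<or> fst q \<le> k}"
  unfolding complete_sublattice_def
proof (intro allI impI conjI)
  fix S :: "('a \<times> bool) set"
  assume S: "S \<subseteq> {q. snd q \<or> fst q \<le> k}"
  show "Inf S \<in> {q. snd q \<or> fst q \<le> k}"
  proof (cases "\<forall>q\<in>S. snd q")
    case False
    then obtain q where "q \<in> S" "\<not> snd q" by blast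
    moreover have "fst (Inf S) \<le> fst q" using \<open>q \<in> S\<close> by (simp add: fst_Inf INF_lower)
    ultimately show ?thesis using S by (auto intro: order_trans)
  qed (simp add: snd_Inf)
  show "Sup S \<in> {q. snd q \<or> fst q \<le> k}"
  proof (cases "\<exists>q\<in>S. snd q")
    case False
    then have "fst (Sup S) \<le> k" using S by (auto simp: fst_Sup intro: SUP_least)
    then show ?thesis by simp
  qed (simp add: snd_Sup)
qed

lemma non_generatorI:
  assumes "\<And>U. complete_sublattice U \<Longrightarrow> a \<in> U"
  shows "non_generator a"
proof -
  have "gen (insert a X) = gen X" for X unfolding gen_def using assms by blast
  then show ?thesis unfolding non_generator_def by simp
qed

lemma relative_generatorI:
  assumes "complete_sublattice T" "a \<notin> T"
    and "\<And>U. complete_sublattice U \<Longrightarrow> insert a T \<subseteq> U \<Longrightarrow> U = UNIV"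
  shows "relative_generator a"
proof -
  have "gen (insert a T) = UNIV" unfolding gen_def using assms(3) by blast
  moreover have "gen T \<noteq> UNIV" unfolding gen_def using assms(1,2) by blast
  ultimately show ?thesis unfolding relative_generator_def non_generator_def by blast
qed

lemma Inf_enat_in: "A \<noteq> {} \<Longrightarrow> Inf (A::enat set) \<in> A"
  unfolding Inf_enat_def by (auto intro: LeastI)

lemma Sup_enat_in: "Sup (A::enat set) \<in> insert 0 (insert \<infinity> A)"
  unfolding Sup_enat_def by (auto intro: Max_in)

lemma complete_sublattice_enat_Compl_singleton:
  "n > 0 \<Longrightarrow> complete_sublattice (- {enat n})"
  by (rule complete_sublattice_Compl_singleton)
    (metis Inf_empty Inf_enat_in enat.distinct(2) top_enat_def,
     metis Sup_enat_in enat.distinct(1) enat_0_iff(1) insertE less_not_refl)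

lemma complete_sublattice_Compl_zero_True: "complete_sublattice (- {(0::enat, True)})"
proof (rule complete_sublattice_Compl_singleton)
  fix S :: "(enat \<times> bool) set"
  assume Inf: "Inf S = (0, True)"
  then have "S \<noteq> {}" by (auto simp: top_prod_def top_enat_def)
  then have "Inf (fst ` S) \<in> fst ` S" by (simp add: Inf_enat_in)
  then obtain q where "q \<in> S" "fst q = Inf (fst ` S)" by (metis imageE)
  moreover have "Inf (fst ` S) = 0" "\<forall>p\<in>S. snd p"
    using fst_Inf[of S] snd_Inf[of S] Inf by simp_all
  ultimately show "(0, True) \<in> S" by (metis prod.collapse)
next
  fix S :: "(enat \<times> bool) set"
  assume Sup: "Sup S = (0, True)"
  then obtain q where "q \<in> S" "snd q"
    using snd_Sup[of S] by auto
  moreover have "fst q \<le> 0"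
    using fst_Sup[of S] Sup \<open>q \<in> S\<close> by (metis SUP_upper fst_conv)
  ultimately show "(0, True) \<in> S" by (metis prod.collapse le_zero_eq)
qed

lemma relative_generator_enat_pos:
  assumes "n > 0"
  shows "relative_generator (enat n, b :: bool)"
proof (rule relative_generatorI)
  let ?T = "fst -` (- {enat n}) :: (enat \<times> bool) set"
  show "complete_sublattice ?T"
    by (intro complete_sublattice_fst_vimage complete_sublattice_enat_Compl_singleton assms)
  show "(enat n, b) \<notin> ?T" by simp
  fix U
  assume U: "complete_sublattice U" "insert (enat n, b) ?T \<subseteq> U"
  have "(enat n, \<not> b) \<in> U"
  proof (cases b)
    case True
    have "inf (enat n, b) (enat (Suc n), False) \<in> U"
      using U by (intro complete_sublattice_inf) auto
    then show ?thesis using True by (simp add: inf_enat_def)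
  next
    case False
    have "sup (enat n, b) (enat (n - 1), True) \<in> U"
      using U assms by (intro complete_sublattice_sup) auto
    then show ?thesis using False by (simp add: sup_enat_def)
  qed
  then have "(x, c) \<in> U" for x c
    using U by (cases "x = enat n"; cases "c = b") (auto simp: subset_iff)
  then show "U = UNIV" by (metis UNIV_eq_I surj_pair)
qed

lemma relative_generator_zero_True: "relative_generator (0::enat, True)"
  by (rule relative_generatorI[OF complete_sublattice_Compl_zero_True]) (auto simp: subset_iff)

lemma relative_generator_infinity_False: "relative_generator (\<infinity>::enat, False)"
proof (rule relative_generatorI)
  let ?T = "{q :: enat \<times> bool. snd q \<or> fst q \<le> 0}"
  show "complete_sublattice ?T" by (rule complete_sublattice_snd_or_fst_le)
  show "(\<infinity>, False) \<notin> ?T" by simp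
  fix U
  assume U: "complete_sublattice U" "insert (\<infinity>, False) ?T \<subseteq> U"
  have "(x, c) \<in> U" for x c
  proof (cases c)
    case False
    have "inf (x, True) (\<infinity>, False) \<in> U"
      using U by (intro complete_sublattice_inf) auto
    then show ?thesis using False by (simp add: inf_enat_def)
  qed (use U in auto)
  then show "U = UNIV" by (metis UNIV_eq_I surj_pair)
qed

lemma relative_generator_if_not_bot_top:
  assumes "a \<noteq> bot" "a \<noteq> top"
  shows "relative_generator (a :: enat \<times> bool)"
proof -
  obtain x b where a: "a = (x, b)" by fastforce
  consider (zero) "x = 0" | (pos) n where "x = enat n" "n > 0" | (infinity) "x = \<infinity>"
    by (metis enat_0 not_gr_zero not_enat_eq)
  then show ?thesis
  proof cases
    case zero
    then have "b" using assms(1) a by (simp add: bot_prod_def bot_enat_def)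
    then show ?thesis using zero a relative_generator_zero_True by simp
  next
    case pos
    then show ?thesis using a relative_generator_enat_pos by simp
  next
    case infinity
    then have "\<not> b" using assms(2) a by (simp add: top_prod_def top_enat_def)
    then show ?thesis using infinity a relative_generator_infinity_False by simp
  qed
qed

lemma non_generator_iff_bot_or_top:
  "non_generator (a :: enat \<times> bool) \<longleftrightarrow> a = bot \<or> a = top"
proof
  assume "non_generator a"
  then show "a = bot \<or> a = top"
    using relative_generator_if_not_bot_top relative_generator_def by blast
next
  assume "a = bot \<or> a = top"
  then show "non_generator a"
    by (metis non_generatorI complete_sublattice_bot complete_sublattice_top)
qed

lemma infinity_False_in_maximal:
  assumes "maximal_proper_complete_sublattice (T :: (enat \<times> bool) set)"
  shows "(\<infinity>, False) \<in> T"
proof (rule ccontr)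
  assume notin: "(\<infinity>, False) \<notin> T"
  have T: "complete_sublattice T"
    and maximal: "\<And>T'. complete_sublattice T' \<Longrightarrow> T \<subseteq> T' \<Longrightarrow> T' = T \<or> T' = UNIV"
    using assms unfolding maximal_proper_complete_sublattice_def by auto
  define s where "s = Sup {p \<in> T. \<not> snd p}"
  have "s \<in> T" unfolding s_def by (rule complete_sublattice_Sup[OF T]) blast
  moreover have "\<not> snd s" by (auto simp: s_def snd_Sup)
  ultimately have "fst s \<noteq> \<infinity>" using notin by (metis prod.collapse)
  then obtain N where N: "fst s = enat N" by (cases "fst s") simp_all
  have bound: "fst p \<le> enat N" if "p \<in> T" "\<not> snd p" for p
  proof -
    have "p \<le> s" unfolding s_def using that by (simp add: Sup_upper)
    then show ?thesis using N by (simp add: less_eq_prod_def)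
  qed
  let ?M = "{q :: enat \<times> bool. snd q \<or> fst q \<le> enat (Suc N)}"
  have "T \<subseteq> ?M"
  proof
    fix q
    assume "q \<in> T"
    then have "snd q \<or> fst q \<le> enat N" using bound by blast
    then show "q \<in> ?M" using order_trans[of "fst q" "enat N" "enat (Suc N)"] by auto
  qed
  moreover have "(enat (Suc N), False) \<notin> T" using bound by fastforce
  moreover have "(enat (Suc N), False) \<in> ?M" by simp
  moreover have "(\<infinity>, False) \<notin> ?M" by simp
  ultimately show False using maximal[OF complete_sublattice_snd_or_fst_le] by blast
qed

theorem proposition2:
  shows "relative_generator ((\<infinity>::enat), False)
    \<and> (\<forall>T :: (enat \<times> bool) set. maximal_proper_complete_sublattice T \<longrightarrow> ((\<infinity>::enat), False) \<in> T)
    \<and> complete_sublattice {a :: enat \<times> bool. non_generator a}"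
proof (intro conjI allI impI)
  show "relative_generator ((\<infinity>::enat), False)"
    by (rule relative_generator_infinity_False)
  show "((\<infinity>::enat), False) \<in> T" if "maximal_proper_complete_sublattice T" for T
    using that by (rule infinity_False_in_maximal)
  have "{a :: enat \<times> bool. non_generator a} = {bot, top}"
    using non_generator_iff_bot_or_top by auto
  then show "complete_sublattice {a :: enat \<times> bool. non_generator a}"
    using complete_sublattice_bot_top by simp
qed

end
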